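(* A \textsc{2-Visits} instance $d_1\le\dots\le d_n$ in which at most two distinct numbers occur can be solved (i.e., it can be decided whether a feasible schedule exists) in $O(n)$ time.
   Context: \textsc{2-Visits}: given a non-decreasing sequence of $n$ positive integers (deadlines) $d_1\le \dots\le d_n$, decide whether there exists a schedule of length $2n$ (an assignment of one visit to each position $1,\dots,2n$) containing exactly two visits of each node $i\in[n]$, such that the first visit of $i$ is at position at most $d_i$ and the second visit of $i$ is at most $d_i$ positions after the first visit of $i$. *)

theory Defs
  imports Main
begin

definition two_visits_feasible :: "nat list \<Rightarrow> bool" where
  "two_visits_feasible ds \<longleftrightarrow>
     (\<exists>s :: nat \<Rightarrow> nat.
        (\<forall>p \<in> {1..2 * length ds}. s p < length ds) \<and>
        (\<forall>i < length ds. \<exists>p q. 1 \<le> p \<and> p < q \<and> q \<le> 2 * length ds \<and>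
            {r \<in> {1..2 * length ds}. s r = i} = {p, q} \<and>
            p \<le> ds ! i \<and> q - p \<le> ds ! i))"

text \<open>Register 0 initially holds the input length n, all other registers 0.
  Each executed instruction costs one time step.\<close>

datatype instr =
    Const nat nat
  | Add nat nat nat
  | Sub nat nat nat
  | Read nat nat
  | JmpLess nat nat nat
  | Jmp nat
  | Accept
  | Reject

datatype config = Running nat "nat \<Rightarrow> nat" | Halted bool

fun exec_instr :: "nat list \<Rightarrow> instr \<Rightarrow> nat \<Rightarrow> (nat \<Rightarrow> nat) \<Rightarrow> config" where
  "exec_instr ds (Const r c) pc R = Running (Suc pc) (R(r := c))"
| "exec_instr ds (Add r a b) pc R = Running (Suc pc) (R(r := R a + R b))"
| "exec_instr ds (Sub r a b) pc R = Running (Suc pc) (R(r := R a - R b))"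
| "exec_instr ds (Read r i) pc R =
     Running (Suc pc) (R(r := (if R i < length ds then ds ! (R i) else 0)))"
| "exec_instr ds (JmpLess a b l) pc R = Running (if R a < R b then l else Suc pc) R"
| "exec_instr ds (Jmp l) pc R = Running l R"
| "exec_instr ds Accept pc R = Halted True"
| "exec_instr ds Reject pc R = Halted False"

definition step :: "instr list \<Rightarrow> nat list \<Rightarrow> config \<Rightarrow> config" where
  "step P ds c = (case c of
      Halted b \<Rightarrow> Halted b
    | Running pc R \<Rightarrow> (if pc < length P then exec_instr ds (P ! pc) pc R else Halted False))"

definition run :: "instr list \<Rightarrow> nat list \<Rightarrow> nat \<Rightarrow> config" where
  "run P ds t = (step P ds ^^ t) (Running 0 (\<lambda>r. if r = 0 then length ds else 0))"

end

(*
  In a sorted instance with two deadlines, the first k nodes have deadline a and the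
  other N - k nodes deadline b > a, and feasibility is an arithmetic condition on
  N, k, a, b.  When it holds, either two rounds suffice (each node visited twice in a
  row), or the first e = b - N nodes fill positions 1..2e, the remaining nodes of
  deadline a take their first visits at the first 2e positions of each period of
  length b - a (after the first period), and all second visits after position b are
  ranked earliest deadline first; Hall's condition then amounts to counting these
  periodic positions in windows.  Conversely, in any schedule the deadline-a nodes
  still unfinished at time b have no first visit in (0, b - a] and at most 2e in any
  window of length b - a, because the second visits of all nodes first visited by
  time T that finish after b fit into (b, b + T].  This forces the last of them beyond
  the periodic position.  A register machine scans the input once to find k and
  evaluates the condition, computing the periodic position by repeated addition; it
  halts within O(N) steps.
*)

theory Submission
  imports Defs
begin

section \<open>Schedules as visit times\<close>

definition visit_times :: "nat list \<Rightarrow> (nat \<Rightarrow> nat) \<Rightarrow> (nat \<Rightarrow> nat) \<Rightarrow> bool" where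
  "visit_times ds P Q \<longleftrightarrow>
     (\<forall>v<length ds. 1 \<le> P v \<and> P v < Q v \<and> Q v \<le> 2 * length ds \<and>
        P v \<le> ds ! v \<and> Q v - P v \<le> ds ! v) \<and>
     inj_on P {..<length ds} \<and> inj_on Q {..<length ds} \<and>
     P ` {..<length ds} \<inter> Q ` {..<length ds} = {}"

lemma visit_times_cover:
  assumes "visit_times ds P Q"
  shows "P ` {..<length ds} \<union> Q ` {..<length ds} = {1..2 * length ds}"
proof (rule card_subset_eq)
  have "1 \<le> P v \<and> P v < Q v \<and> Q v \<le> 2 * length ds" if "v < length ds" for v
    using assms that unfolding visit_times_def by blast
  then show sub: "P ` {..<length ds} \<union> Q ` {..<length ds} \<subseteq> {1..2 * length ds}"
    by fastforce
  have "card (P ` {..<length ds}) = length ds" "card (Q ` {..<length ds}) = length ds"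
    using assms unfolding visit_times_def by (simp_all add: card_image)
  moreover have "P ` {..<length ds} \<inter> Q ` {..<length ds} = {}"
    using assms unfolding visit_times_def by blast
  ultimately show "card (P ` {..<length ds} \<union> Q ` {..<length ds}) = card {1..2 * length ds}"
    by (simp add: card_Un_disjoint)
qed simp

lemma visit_times_imp_feasible:
  assumes vt: "visit_times ds P Q"
  shows "two_visits_feasible ds"
proof -
  define V where "V = {..<length ds}"
  define s where "s r = (if r \<in> P ` V then inv_into V P r else inv_into V Q r)" for r
  have bnd: "\<And>v. v \<in> V \<Longrightarrow> 1 \<le> P v \<and> P v < Q v \<and> Q v \<le> 2 * length ds \<and>
      P v \<le> ds ! v \<and> Q v - P v \<le> ds ! v"
    and inj: "inj_on P V" "inj_on Q V" and disj: "P ` V \<inter> Q ` V = {}"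
    using vt unfolding visit_times_def V_def by auto
  have sP: "s (P v) = v" if "v \<in> V" for v
    using that inj(1) unfolding s_def by simp
  have sQ: "s (Q v) = v" if "v \<in> V" for v
    using that inj(2) disj unfolding s_def by auto
  have cover: "{1..2 * length ds} = P ` V \<union> Q ` V"
    using visit_times_cover[OF vt] unfolding V_def by simp
  have visits: "{r \<in> {1..2 * length ds}. s r = v} = {P v, Q v}" if "v \<in> V" for v
  proof (intro equalityI subsetI)
    fix r assume "r \<in> {r \<in> {1..2 * length ds}. s r = v}"
    then have "r \<in> P ` V \<union> Q ` V" "s r = v"
      unfolding cover by auto
    then show "r \<in> {P v, Q v}"
      using sP sQ by auto
  next
    fix r assume "r \<in> {P v, Q v}"
    then show "r \<in> {r \<in> {1..2 * length ds}. s r = v}"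
      unfolding cover using sP sQ that by auto
  qed
  show ?thesis
    unfolding two_visits_feasible_def
  proof (intro exI[of _ s] conjI allI impI ballI)
    show "s r < length ds" if "r \<in> {1..2 * length ds}" for r
      using that sP sQ unfolding cover V_def by auto
    show "\<exists>p q. 1 \<le> p \<and> p < q \<and> q \<le> 2 * length ds \<and> {r \<in> {1..2 * length ds}. s r = v} = {p, q} \<and>
        p \<le> ds ! v \<and> q - p \<le> ds ! v" if "v < length ds" for v
      using that bnd[of v] visits[of v] unfolding V_def
      by (intro exI[of _ "P v"] exI[of _ "Q v"]) simp
  qed
qed

lemma feasible_imp_visit_times:
  assumes "two_visits_feasible ds"
  obtains P Q where "visit_times ds P Q"
proof -
  obtain s where "\<forall>i < length ds. \<exists>p q. 1 \<le> p \<and> p < q \<and> q \<le> 2 * length ds \<and>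
      {r \<in> {1..2 * length ds}. s r = i} = {p, q} \<and> p \<le> ds ! i \<and> q - p \<le> ds ! i"
    using assms unfolding two_visits_feasible_def by blast
  then obtain P Q where PQ: "\<forall>i < length ds. 1 \<le> P i \<and> P i < Q i \<and> Q i \<le> 2 * length ds \<and>
      {r \<in> {1..2 * length ds}. s r = i} = {P i, Q i} \<and> P i \<le> ds ! i \<and> Q i - P i \<le> ds ! i"
    unfolding choice_iff' by blast
  have sP: "s (P i) = i" and sQ: "s (Q i) = i" if "i < length ds" for i
  proof -
    have "{r \<in> {1..2 * length ds}. s r = i} = {P i, Q i}"
      using PQ that by blast
    then show "s (P i) = i" "s (Q i) = i"
      by blast+
  qed
  have "visit_times ds P Q"
    unfolding visit_times_def
  proof (intro conjI)
    show "inj_on P {..<length ds}" "inj_on Q {..<length ds}"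
      by (metis inj_onI lessThan_iff sP sQ)+
    show "P ` {..<length ds} \<inter> Q ` {..<length ds} = {}"
    proof (intro equals0I)
      fix r assume "r \<in> P ` {..<length ds} \<inter> Q ` {..<length ds}"
      then obtain u v where "u < length ds" "v < length ds" "r = P u" "r = Q v"
        by blast
      then show False
        using sP sQ PQ by (metis less_irrefl)
    qed
  qed (use PQ in auto)
  then show thesis
    by (rule that)
qed

lemma two_rounds_feasible:
  assumes "x \<le> length ds"
    and first: "\<And>v. v < x \<Longrightarrow> v + 1 \<le> ds ! v \<and> x \<le> ds ! v"
    and rest: "\<And>v. x \<le> v \<Longrightarrow> v < length ds \<Longrightarrow> x + v + 1 \<le> ds ! v \<and> length ds - x \<le> ds ! v"
  shows "two_visits_feasible ds"
proof -
  define P where "P v = (if v < x then v + 1 else x + v + 1)" for v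
  define Q where "Q v = (if v < x then x + v + 1 else length ds + v + 1)" for v
  have "visit_times ds P Q"
    unfolding visit_times_def
  proof (intro conjI allI impI)
    fix v assume "v < length ds"
    then show "1 \<le> P v" "P v < Q v" "Q v \<le> 2 * length ds" "P v \<le> ds ! v" "Q v - P v \<le> ds ! v"
      using first[of v] rest[of v] assms(1) unfolding P_def Q_def by auto
  next
    show "inj_on P {..<length ds}"
      unfolding P_def by (rule inj_onI) (auto split: if_splits)
    show "inj_on Q {..<length ds}"
      unfolding Q_def by (rule inj_onI) (use assms(1) in \<open>auto split: if_splits\<close>)
    show "P ` {..<length ds} \<inter> Q ` {..<length ds} = {}"
      unfolding P_def Q_def using assms(1) by (auto split: if_splits)
  qed
  then show ?thesis
    by (rule visit_times_imp_feasible)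
qed

lemma earliest_deadline_first:
  fixes S :: "'a::linorder set" and \<kappa> :: "'a \<Rightarrow> nat"
  assumes fin: "finite S" and hall: "\<And>K. card {v\<in>S. \<kappa> v \<le> K} \<le> K"
  obtains \<rho> where "inj_on \<rho> S" and "\<And>i. i \<in> S \<Longrightarrow> 1 \<le> \<rho> i \<and> \<rho> i \<le> card S \<and> \<rho> i \<le> \<kappa> i"
proof -
  define A where "A i = {v\<in>S. \<kappa> v < \<kappa> i \<or> (\<kappa> v = \<kappa> i \<and> v \<le> i)}" for i
  have finA: "finite (A i)" for i
    using fin unfolding A_def by simp
  have less: "card (A i) < card (A j)"
    if "i \<in> S" "j \<in> S" "\<kappa> i < \<kappa> j \<or> (\<kappa> i = \<kappa> j \<and> i < j)" for i j
  proof (rule psubset_card_mono[OF finA])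
    show "A i \<subset> A j"
      using that unfolding A_def by auto
  qed
  show thesis
  proof (rule that)
    show "inj_on (\<lambda>i. card (A i)) S"
    proof (rule inj_onI)
      fix i j assume "i \<in> S" "j \<in> S" "card (A i) = card (A j)"
      then show "i = j"
        using less[of i j] less[of j i] by (metis linorder_neqE_nat nless_le not_less_iff_gr_or_eq)
    qed
    fix i assume i: "i \<in> S"
    then have "i \<in> A i"
      unfolding A_def by simp
    then have "1 \<le> card (A i)"
      using finA by (metis One_nat_def Suc_leI card_gt_0_iff empty_iff)
    moreover have "card (A i) \<le> card S"
      using fin unfolding A_def by (intro card_mono) auto
    moreover have "card (A i) \<le> card {v\<in>S. \<kappa> v \<le> \<kappa> i}"
      using fin unfolding A_def by (intro card_mono) auto
    ultimately show "1 \<le> card (A i) \<and> card (A i) \<le> card S \<and> card (A i) \<le> \<kappa> i"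
      using hall[of "\<kappa> i"] by linarith
  qed
qed

lemma hall_condition_pullback:
  assumes "inj_on f V" "f ` V \<subseteq> S" "finite S"
    and "\<And>v. v \<in> V \<Longrightarrow> \<kappa>' (f v) \<le> \<kappa> v" and "card {p \<in> S. \<kappa>' p \<le> K} \<le> K"
  shows "card {v \<in> V. \<kappa> v \<le> K} \<le> K"
proof -
  have "f ` {v \<in> V. \<kappa> v \<le> K} \<subseteq> {p \<in> S. \<kappa>' p \<le> K}"
    using assms(2,4) by force
  then have "card {v \<in> V. \<kappa> v \<le> K} \<le> card {p \<in> S. \<kappa>' p \<le> K}"
    using assms(1,3) by (intro card_inj_on_le[of f]) (auto intro: inj_on_subset)
  then show ?thesis
    using assms(5) by linarith
qed

section \<open>Periodic positions\<close>

(* The t-th (from 0) position p > w with (p - 1) mod w < q, i.e. the first q positions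
   of every period of length w except the first period. *)
definition periodic_slot :: "nat \<Rightarrow> nat \<Rightarrow> nat \<Rightarrow> nat" where
  "periodic_slot w q t = (t div q + 1) * w + t mod q + 1"

lemma periodic_slot_gt: "w < periodic_slot w q t"
  unfolding periodic_slot_def by simp

lemma periodic_slot_mono:
  assumes "0 < q" "q \<le> w" "t \<le> t'"
  shows "periodic_slot w q t \<le> periodic_slot w q t'"
proof (cases "t div q = t' div q")
  case True
  have "t div q * q + t mod q = t" "t div q * q + t' mod q = t'"
    by (simp, simp add: True)
  then have "t mod q \<le> t' mod q"
    using assms(3) by linarith
  then show ?thesis
    using True unfolding periodic_slot_def by simp
next
  case False
  then have "t div q + 1 \<le> t' div q"
    using div_le_mono[OF assms(3), of q] by linarith
  have "t mod q < w"
    using assms(1,2) by (meson mod_less_divisor order_less_le_trans)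
  then have "(t div q + 1) * w + t mod q < (t div q + 1) * w + w"
    by simp
  also have "\<dots> = (t div q + 1 + 1) * w"
    by simp
  also have "\<dots> \<le> (t' div q + 1) * w"
    using \<open>t div q + 1 \<le> t' div q\<close> by (intro mult_le_mono1) simp
  finally show ?thesis
    unfolding periodic_slot_def by simp
qed

lemma periodic_slot_minus_one_mod:
  assumes "0 < q" "q \<le> w"
  shows "(periodic_slot w q t - 1) mod w = t mod q"
proof -
  have "periodic_slot w q t - 1 = t mod q + (t div q + 1) * w"
    unfolding periodic_slot_def by simp
  also have "\<dots> mod w = t mod q mod w"
    by (rule mod_mult_self1)
  also have "\<dots> = t mod q"
    using assms by (meson mod_less mod_less_divisor order_less_le_trans)
  finally show ?thesis .
qed

lemma inj_periodic_slot:
  assumes "0 < q" "q \<le> w"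
  shows "inj (periodic_slot w q)"
proof (rule injI)
  fix t t' assume eq: "periodic_slot w q t = periodic_slot w q t'"
  then have "t mod q = t' mod q"
    using periodic_slot_minus_one_mod[OF assms] by metis
  moreover from eq this have "t div q = t' div q"
    using assms unfolding periodic_slot_def by simp
  ultimately show "t = t'"
    by (metis div_mult_mod_eq)
qed

lemma inj_on_mod_window: "inj_on (\<lambda>p. (p - 1) mod w) {X<..X + w :: nat}"
proof -
  have le: "p = p'" if "p \<le> p'" "p \<in> {X<..X + w}" "p' \<in> {X<..X + w}"
    and "(p - 1) mod w = (p' - 1) mod w" for p p'
  proof -
    have "p - 1 \<le> p' - 1"
      using that(1) by (rule diff_le_mono)
    moreover have "(p' - 1) mod w = (p - 1) mod w"
      using that(4) by (rule sym)
    ultimately have "w dvd (p' - 1) - (p - 1)"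
      by (simp only: mod_eq_dvd_iff_nat)
    moreover have "(p' - 1) - (p - 1) < w"
      using that(1-3) by auto
    ultimately have "(p' - 1) - (p - 1) = 0"
      using nat_dvd_not_less by blast
    then show "p = p'"
      using that(1,2) by simp
  qed
  show ?thesis
  proof (rule inj_onI)
    fix p p' assume "p \<in> {X<..X + w}" "p' \<in> {X<..X + w}" "(p - 1) mod w = (p' - 1) mod w"
    then show "p = p'"
      using le[of p p'] le[of p' p] by (metis nat_le_linear)
  qed
qed

lemma card_periodic_slots_window:
  assumes "0 < q" "q \<le> w"
  shows "card (periodic_slot w q ` T \<inter> {X<..X + w}) \<le> q"
proof -
  have "(\<lambda>p. (p - 1) mod w) ` (periodic_slot w q ` T \<inter> {X<..X + w}) \<subseteq> {..<q}"
    using periodic_slot_minus_one_mod[OF assms] assms(1) by auto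
  then have "card (periodic_slot w q ` T \<inter> {X<..X + w}) \<le> card {..<q}"
    by (intro card_inj_on_le[OF inj_on_subset[OF inj_on_mod_window]]) auto
  then show ?thesis
    by simp
qed

lemma card_periodic_slots_initial:
  assumes "0 < q" "q \<le> w" "K \<le> q"
  shows "card (periodic_slot w q ` T \<inter> {..w + K}) \<le> K"
proof -
  have "periodic_slot w q ` T \<inter> {..w + K} \<subseteq> periodic_slot w q ` {..<K}"
  proof
    fix p assume "p \<in> periodic_slot w q ` T \<inter> {..w + K}"
    then obtain t where p: "p = periodic_slot w q t" "p \<le> w + K"
      by auto
    have "t div q = 0"
    proof (rule ccontr)
      assume "t div q \<noteq> 0"
      then have "2 * w \<le> (t div q + 1) * w"
        by (intro mult_le_mono1) simp
      then show False
        using p assms(2,3) unfolding periodic_slot_def by linarith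
    qed
    then have "t < q" "p = w + t + 1"
      using assms(1) p(1) unfolding periodic_slot_def by (simp_all add: div_eq_0_iff)
    then have "t < K"
      using p(2) by simp
    then show "p \<in> periodic_slot w q ` {..<K}"
      using p(1) by blast
  qed
  then have "card (periodic_slot w q ` T \<inter> {..w + K}) \<le> card (periodic_slot w q ` {..<K})"
    by (intro card_mono) auto
  also have "\<dots> \<le> K"
    using card_image_le[of "{..<K}" "periodic_slot w q"] by simp
  finally show ?thesis .
qed

lemma periodic_slots_hall:
  assumes "0 < q" "q \<le> w"
  shows "card {p \<in> {q<..B}. (if p \<in> periodic_slot w q ` T then p - w else p) \<le> K} \<le> K"
proof -
  let ?A = "periodic_slot w q ` T"
  let ?E = "{p \<in> {q<..B}. (if p \<in> ?A then p - w else p) \<le> K}"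
  show ?thesis
  proof (cases "K < q")
    case True
    then have "?E \<subseteq> ?A \<inter> {..w + K}"
      by auto
    then have "card ?E \<le> card (?A \<inter> {..w + K})"
      by (intro card_mono) auto
    also have "\<dots> \<le> K"
      using True assms by (intro card_periodic_slots_initial) auto
    finally show ?thesis .
  next
    case False
    have "?E \<subseteq> (?A \<inter> {K<..K + w}) \<union> {q<..K}"
      by auto
    then have "card ?E \<le> card ((?A \<inter> {K<..K + w}) \<union> {q<..K})"
      by (intro card_mono) auto
    also have "\<dots> \<le> card (?A \<inter> {K<..K + w}) + card {q<..K}"
      by (rule card_Un_le)
    also have "\<dots> \<le> q + (K - q)"
      using card_periodic_slots_window[OF assms] by (intro add_mono) auto
    finally show ?thesis
      using False by simp
  qed
qed

lemma card_below_periodic_slot: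
  fixes F :: "nat set"
  assumes beyond: "\<And>p. p \<in> F \<Longrightarrow> w < p" and window: "\<And>X. card (F \<inter> {X<..X + w}) \<le> q"
  shows "card (F \<inter> {..<periodic_slot w q t}) \<le> t"
proof -
  have split: "card (F \<inter> {..y}) \<le> card (F \<inter> {..x}) + card (F \<inter> {x<..y})" for x y
  proof -
    have "F \<inter> {..y} \<subseteq> (F \<inter> {..x}) \<union> (F \<inter> {x<..y})"
      by auto
    then have "card (F \<inter> {..y}) \<le> card ((F \<inter> {..x}) \<union> (F \<inter> {x<..y}))"
      by (intro card_mono) auto
    also have "\<dots> \<le> card (F \<inter> {..x}) + card (F \<inter> {x<..y})"
      by (rule card_Un_le)
    finally show ?thesis .
  qed
  have blocks: "card (F \<inter> {..(j + 1) * w}) \<le> q * j" for j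
  proof (induction j)
    case 0
    have "F \<inter> {..(0 + 1) * w} = {}"
      using beyond by fastforce
    then show ?case
      by simp
  next
    case (Suc j)
    then show ?case
      using split[of "(Suc j + 1) * w" "(j + 1) * w"] window[of "(j + 1) * w"]
      by (simp add: add.commute)
  qed
  let ?c = "t div q" and ?u = "t mod q"
  have "card (F \<inter> {..<periodic_slot w q t}) = card (F \<inter> {..(?c + 1) * w + ?u})"
    unfolding periodic_slot_def by (simp add: lessThan_Suc_atMost)
  also have "\<dots> \<le> card (F \<inter> {..(?c + 1) * w}) + card (F \<inter> {(?c + 1) * w<..(?c + 1) * w + ?u})"
    by (rule split)
  also have "\<dots> \<le> q * ?c + ?u"
    using blocks[of ?c]
      card_mono[OF finite_greaterThanAtMost Int_lower2, of F "(?c + 1) * w" "(?c + 1) * w + ?u"]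
    by (intro add_mono) auto
  also have "\<dots> = t"
    by (rule mult_div_mod_eq)
  finally show ?thesis .
qed

lemma exists_ge_periodic_slot:
  fixes F :: "nat set"
  assumes "0 < w" and beyond: "\<And>p. p \<in> F \<Longrightarrow> w < p"
    and window: "\<And>X. card (F \<inter> {X<..X + w}) \<le> q" and "t < card F"
  shows "0 < q" and "\<exists>p\<in>F. periodic_slot w q t \<le> p"
proof -
  obtain p where "p \<in> F"
    using \<open>t < card F\<close> by fastforce
  then have "p \<in> F \<inter> {p - w<..p - w + w}"
    using beyond[of p] \<open>0 < w\<close> by auto
  then have "0 < card (F \<inter> {p - w<..p - w + w})"
    by (auto simp: card_gt_0_iff)
  then show "0 < q"
    using window[of "p - w"] by simp
  have "card (F \<inter> {..<periodic_slot w q t}) < card F"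
    using card_below_periodic_slot[OF beyond window] \<open>t < card F\<close> by (rule le_less_trans)
  then have "\<not> F \<subseteq> {..<periodic_slot w q t}"
    by (metis inf.absorb1 less_irrefl)
  then show "\<exists>p\<in>F. periodic_slot w q t \<le> p"
    by (auto simp: not_less)
qed

lemma periodic_slot_Suc:
  assumes "0 < q" "q \<le> w"
  shows "periodic_slot w q (Suc t) =
    (if Suc (t mod q) < q then periodic_slot w q t + 1 else periodic_slot w q t + 1 + (w - q))"
proof (cases "Suc (t mod q) < q")
  case True
  then have "Suc t mod q = Suc (t mod q)" "Suc t div q = t div q"
    by (simp_all add: mod_Suc div_Suc)
  then show ?thesis
    using True unfolding periodic_slot_def by simp
next
  case False
  then have "Suc (t mod q) = q"
    using assms(1) by (metis Suc_leI le_neq_implies_less mod_less_divisor)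
  then have "Suc t mod q = 0" "Suc t div q = t div q + 1"
    by (simp_all add: mod_Suc div_Suc)
  then show ?thesis
    using False \<open>Suc (t mod q) = q\<close> assms(2) unfolding periodic_slot_def
    by (simp add: algebra_simps)
qed

lemma early_block_feasible:
  assumes N: "length ds = N" and b: "b = N + e" and "e \<le> N"
    and early: "\<And>v. v < e \<Longrightarrow> e \<le> ds ! v"
    and F: "inj_on F {e..<N}" "\<And>v. e \<le> v \<Longrightarrow> v < N \<Longrightarrow> 2 * e < F v \<and> F v \<le> b \<and> F v \<le> ds ! v"
    and G: "inj_on G {e..<N}" "\<And>v. e \<le> v \<Longrightarrow> v < N \<Longrightarrow> b < G v \<and> G v \<le> 2 * N \<and> G v - F v \<le> ds ! v"
  shows "two_visits_feasible ds"
proof -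
  define P where "P v = (if v < e then v + 1 else F v)" for v
  define Q where "Q v = (if v < e then e + v + 1 else G v)" for v
  have split: "{..<N} = {..<e} \<union> {e..<N}"
    using \<open>e \<le> N\<close> by auto
  have "visit_times ds P Q"
    unfolding visit_times_def N
  proof (intro conjI allI impI)
    fix v assume "v < N"
    then show "1 \<le> P v" "P v < Q v" "Q v \<le> 2 * N" "P v \<le> ds ! v" "Q v - P v \<le> ds ! v"
      using early[of v] F(2)[of v] G(2)[of v] \<open>e \<le> N\<close> unfolding P_def Q_def by auto
  next
    have "F ` {e..<N} \<subseteq> {2 * e<..}"
      using F(2) by force
    then have "inj_on (\<lambda>v. if v \<in> {..<e} then v + 1 else F v) ({..<e} \<union> {e..<N})"
      using F(1) by (intro inj_on_disjoint_Un) (auto simp: inj_on_def)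
    then show "inj_on P {..<N}"
      unfolding split P_def by (simp cong: inj_on_cong)
    have "G ` {e..<N} \<subseteq> {b<..}"
      using G(2) by force
    then have "inj_on (\<lambda>v. if v \<in> {..<e} then e + v + 1 else G v) ({..<e} \<union> {e..<N})"
      using G(1) b by (intro inj_on_disjoint_Un) (auto simp: inj_on_def)
    then show "inj_on Q {..<N}"
      unfolding split Q_def by (simp cong: inj_on_cong)
    have "P v \<noteq> Q u" if "v < N" "u < N" for u v
      using that F(2)[of v] G(2)[of u] F(2)[of u] b unfolding P_def Q_def by auto
    then show "P ` {..<N} \<inter> Q ` {..<N} = {}"
      by blast
  qed
  then show ?thesis
    by (rule visit_times_imp_feasible)
qed

lemma early_block_hall_feasible:
  assumes N: "length ds = N" and b: "b = N + e" and "e \<le> N"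
    and early: "\<And>v. v < e \<Longrightarrow> e \<le> ds ! v"
    and F: "inj_on F {e..<N}" "\<And>v. e \<le> v \<Longrightarrow> v < N \<Longrightarrow> 2 * e < F v \<and> F v \<le> b \<and> F v \<le> ds ! v"
    and hall: "\<And>K. card {v \<in> {e..<N}. F v + ds ! v - b \<le> K} \<le> K"
  shows "two_visits_feasible ds"
proof -
  \<comment> \<open>F v + ds ! v - b is the latest admissible second visit of v, counted from b\<close>
  obtain \<rho> where \<rho>: "inj_on \<rho> {e..<N}"
    "\<And>v. v \<in> {e..<N} \<Longrightarrow> 1 \<le> \<rho> v \<and> \<rho> v \<le> card {e..<N} \<and> \<rho> v \<le> F v + ds ! v - b"
    using earliest_deadline_first[OF _ hall] by blast
  show ?thesis
  proof (rule early_block_feasible[OF N b \<open>e \<le> N\<close> early F, of "\<lambda>v. b + \<rho> v"])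
    show "inj_on (\<lambda>v. b + \<rho> v) {e..<N}"
      using \<rho>(1) by (simp add: inj_on_def)
    show "b < b + \<rho> v \<and> b + \<rho> v \<le> 2 * N \<and> b + \<rho> v - F v \<le> ds ! v" if "e \<le> v" "v < N" for v
      using \<rho>(2)[of v] F(2)[of v] that b by auto
  qed
qed

lemma bij_betw_extend_to_complement:
  assumes f: "bij_betw f X A" and "A \<subseteq> S" "finite S" "finite Y" "X \<inter> Y = {}"
    and card: "card Y = card S - card A"
  obtains g where "bij_betw g (X \<union> Y) S" "\<And>x. x \<in> X \<Longrightarrow> g x = f x" "\<And>y. y \<in> Y \<Longrightarrow> g y \<notin> A"
proof -
  have "card Y = card (S - A)"
    using card \<open>A \<subseteq> S\<close> \<open>finite S\<close> by (simp add: card_Diff_subset finite_subset)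
  then obtain \<sigma> where \<sigma>: "bij_betw \<sigma> Y (S - A)"
    using finite_same_card_bij \<open>finite S\<close> \<open>finite Y\<close> by blast
  show thesis
  proof (rule that)
    have "bij_betw (\<lambda>x. if x \<in> X then f x else \<sigma> x) (X \<union> Y) (A \<union> (S - A))"
      using f \<sigma> \<open>X \<inter> Y = {}\<close> by (intro bij_betw_disjoint_Un) auto
    moreover have "A \<union> (S - A) = S"
      using \<open>A \<subseteq> S\<close> by auto
    ultimately show "bij_betw (\<lambda>x. if x \<in> X then f x else \<sigma> x) (X \<union> Y) S"
      by simp
    show "(if y \<in> X then f y else \<sigma> y) \<notin> A" if "y \<in> Y" for y
      using that bij_betwE[OF \<sigma>] \<open>X \<inter> Y = {}\<close> by auto
  qed simp
qed

lemma periodic_first_visits: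
  assumes q: "0 < q" "q \<le> w" and k: "e < k" "k \<le> N" and "q + N = b + e"
    and last: "periodic_slot w q (k - e - 1) \<le> b"
  obtains F where "bij_betw F {e..<N} {q<..b}"
    and "\<And>v. v \<in> {e..<k} \<Longrightarrow> F v = periodic_slot w q (v - e)"
    and "\<And>v. v \<in> {k..<N} \<Longrightarrow> F v \<notin> periodic_slot w q ` {..<k - e}"
proof -
  define A where "A = periodic_slot w q ` {..<k - e}"
  have "inj_on (\<lambda>v. periodic_slot w q (v - e)) {e..<k}"
  proof (rule inj_onI)
    fix u v assume "u \<in> {e..<k}" "v \<in> {e..<k}"
      and "periodic_slot w q (u - e) = periodic_slot w q (v - e)"
    then show "u = v"
      using injD[OF inj_periodic_slot[OF q]] by fastforce
  qed
  moreover have "(\<lambda>v. v - e) ` {e..<k} = {..<k - e}"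
  proof
    show "{..<k - e} \<subseteq> (\<lambda>v. v - e) ` {e..<k}"
    proof
      fix t assume "t \<in> {..<k - e}"
      then show "t \<in> (\<lambda>v. v - e) ` {e..<k}"
        by (intro image_eqI[of _ _ "t + e"]) auto
    qed
  qed auto
  then have "(\<lambda>v. periodic_slot w q (v - e)) ` {e..<k} = A"
    unfolding A_def by (metis image_image)
  ultimately have slots: "bij_betw (\<lambda>v. periodic_slot w q (v - e)) {e..<k} A"
    unfolding bij_betw_def by simp
  have "periodic_slot w q t \<le> b" if "t < k - e" for t
    using periodic_slot_mono[OF q, of t "k - e - 1"] that last by linarith
  then have "A \<subseteq> {q<..b}"
    using periodic_slot_gt[of w q] q(2) unfolding A_def by (force intro: le_less_trans)
  moreover have "card {k..<N} = card {q<..b} - card A"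
    using bij_betw_same_card[OF slots] k \<open>q + N = b + e\<close> by simp
  moreover have "{e..<k} \<inter> {k..<N} = {}"
    by auto
  ultimately obtain F where F: "bij_betw F ({e..<k} \<union> {k..<N}) {q<..b}"
    and "\<And>v. v \<in> {e..<k} \<Longrightarrow> F v = periodic_slot w q (v - e)" "\<And>v. v \<in> {k..<N} \<Longrightarrow> F v \<notin> A"
    using bij_betw_extend_to_complement[OF slots, of "{q<..b}" "{k..<N}"] by auto
  moreover have "{e..<k} \<union> {k..<N} = {e..<N}"
    using k by auto
  ultimately show thesis
    using that unfolding A_def by simp
qed

lemma periodic_schedule_feasible:
  assumes N: "length ds = N" and b: "b = N + e" and e: "0 < e" "e < k" "k \<le> N"
    and w: "2 * e \<le> b - a" and last: "periodic_slot (b - a) (2 * e) (k - e - 1) \<le> a"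
    and da: "\<And>v. v < k \<Longrightarrow> a \<le> ds ! v" and db: "\<And>v. k \<le> v \<Longrightarrow> v < N \<Longrightarrow> b \<le> ds ! v"
  shows "two_visits_feasible ds"
proof -
  define w q where "w = b - a" and "q = 2 * e"
  define A S where "A = periodic_slot w q ` {..<k - e}" and "S = {q<..b}"
  have q: "0 < q" "q \<le> w"
    using e w unfolding q_def w_def by auto
  have slot_le: "periodic_slot w q t \<le> a" if "t < k - e" for t
    using periodic_slot_mono[OF q, of t "k - e - 1"] that last unfolding w_def q_def by linarith
  then have A_wa: "A \<subseteq> {w<..a}"
    using periodic_slot_gt unfolding A_def by auto
  have "w < a"
    using slot_le[of 0] periodic_slot_gt[of w q 0] e(2) by simp
  obtain F where F: "bij_betw F {e..<N} S"
    and F_slot: "\<And>v. v \<in> {e..<k} \<Longrightarrow> F v = periodic_slot w q (v - e)"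
    and F_late: "\<And>v. v \<in> {k..<N} \<Longrightarrow> F v \<notin> A"
  proof (rule periodic_first_visits[OF q e(2,3)])
    show "q + N = b + e"
      unfolding q_def b by simp
    show "periodic_slot w q (k - e - 1) \<le> b"
      using slot_le[of "k - e - 1"] e(2) q unfolding w_def by linarith
  qed (auto simp: A_def S_def)
  \<comment> \<open>p + d - b, where d is the deadline of the node first visited at p\<close>
  define \<kappa> where "\<kappa> p = (if p \<in> A then p - w else p)" for p
  have F_bounds: "F v \<in> S \<and> F v \<le> ds ! v \<and> \<kappa> (F v) \<le> F v + ds ! v - b" if "e \<le> v" "v < N" for v
  proof (cases "v < k")
    case True
    then have "F v \<in> A"
      using that F_slot unfolding A_def by auto
    then show ?thesis
      using that True bij_betwE[OF F] A_wa da[of v] unfolding \<kappa>_def w_def by force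
  next
    case False
    have "F v \<in> S"
      using that bij_betwE[OF F] by simp
    then show ?thesis
      using that False F_late[of v] db[of v] unfolding \<kappa>_def S_def by auto
  qed
  show ?thesis
  proof (rule early_block_hall_feasible[OF N b])
    show "e \<le> N"
      using e by simp
    show "e \<le> ds ! v" if "v < e" for v
      using da[of v] that e \<open>w < a\<close> w unfolding w_def by simp
    show "inj_on F {e..<N}"
      using F by (rule bij_betw_imp_inj_on)
    show "2 * e < F v \<and> F v \<le> b \<and> F v \<le> ds ! v" if "e \<le> v" "v < N" for v
      using F_bounds[OF that] unfolding S_def q_def by simp
    show "card {v \<in> {e..<N}. F v + ds ! v - b \<le> K} \<le> K" for K
    proof (rule hall_condition_pullback)
      show "inj_on F {e..<N}" "F ` {e..<N} \<subseteq> S"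
        using F by (auto simp: bij_betw_def)
      show "card {p \<in> S. \<kappa> p \<le> K} \<le> K"
        unfolding S_def \<kappa>_def A_def by (rule periodic_slots_hall[OF q])
    qed (use F_bounds in \<open>auto simp: S_def\<close>)
  qed
qed

section \<open>Necessary conditions\<close>

lemma visit_times_bounds:
  assumes "visit_times ds P Q" "v < length ds"
  shows "1 \<le> P v" "P v < Q v" "Q v \<le> 2 * length ds" "P v \<le> ds ! v" "Q v \<le> P v + ds ! v"
  using assms unfolding visit_times_def by auto

lemma visit_times_inj:
  assumes "visit_times ds P Q"
  shows "inj_on P {..<length ds}" "inj_on Q {..<length ds}"
  using assms unfolding visit_times_def by auto

lemma card_finished_by_le:
  assumes vt: "visit_times ds P Q" and dmax: "\<And>v. v < length ds \<Longrightarrow> ds ! v \<le> b"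
  shows "length ds + card {v. v < length ds \<and> Q v \<le> b} \<le> b"
proof -
  let ?V = "{..<length ds}" and ?E = "{v. v < length ds \<and> Q v \<le> b}"
  have "P ` ?V \<union> Q ` ?E \<subseteq> {1..b}"
    using visit_times_bounds[OF vt] dmax by (fastforce intro: order_trans)
  then have "card (P ` ?V \<union> Q ` ?E) \<le> b"
    using card_mono[of "{1..b}"] by fastforce
  moreover have "P ` ?V \<inter> Q ` ?E = {}"
    using vt unfolding visit_times_def by blast
  moreover have "card (P ` ?V) = length ds" "card (Q ` ?E) = card ?E"
    using visit_times_inj[OF vt] by (auto simp: card_image intro: card_image inj_on_subset)
  ultimately show ?thesis
    by (simp add: card_Un_disjoint)
qed

lemma card_prefix_visits:
  assumes vt: "visit_times ds P Q" and "T \<le> 2 * length ds" "T \<le> b"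
  shows "T \<le> card {v. v < length ds \<and> b < Q v \<and> P v \<le> T} + 2 * card {v. v < length ds \<and> Q v \<le> b}"
proof -
  let ?Y = "{v. v < length ds \<and> b < Q v \<and> P v \<le> T}" and ?E = "{v. v < length ds \<and> Q v \<le> b}"
  have "{1..T} \<subseteq> P ` ?Y \<union> P ` ?E \<union> Q ` ?E"
  proof
    fix r assume r: "r \<in> {1..T}"
    then have "r \<in> P ` {..<length ds} \<union> Q ` {..<length ds}"
      using visit_times_cover[OF vt] assms(2) by auto
    then obtain v where v: "v < length ds" "r = P v \<or> r = Q v"
      by blast
    show "r \<in> P ` ?Y \<union> P ` ?E \<union> Q ` ?E"
    proof (cases "Q v \<le> b")
      case False
      then have "r = P v"
        using v r assms(3) by auto
      then have "v \<in> ?Y"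
        using v(1) False r by simp
      then show ?thesis
        using \<open>r = P v\<close> by blast
    qed (use v in blast)
  qed
  then have "T \<le> card (P ` ?Y \<union> P ` ?E \<union> Q ` ?E)"
    using card_mono[of "P ` ?Y \<union> P ` ?E \<union> Q ` ?E" "{1..T}"] by simp
  also have "\<dots> \<le> card (P ` ?Y) + card (P ` ?E) + card (Q ` ?E)"
    by (meson add_mono card_Un_le le_refl order_trans)
  also have "\<dots> \<le> card ?Y + card ?E + card ?E"
    by (intro add_mono card_image_le) auto
  finally show ?thesis
    by simp
qed

lemma card_late_first_visits_window:
  assumes vt: "visit_times ds P Q" and dmax: "\<And>v. v < length ds \<Longrightarrow> ds ! v \<le> b"
    and "a \<le> length ds" "length ds \<le> b"
  defines "L \<equiv> {v. v < length ds \<and> ds ! v \<le> a \<and> b < Q v}"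
  shows "card (P ` L \<inter> {T<..T + (b - a)}) \<le> 2 * (b - length ds)"
proof (cases "T < a")
  case False
  then have "P ` L \<inter> {T<..T + (b - a)} = {}"
    using visit_times_bounds(4)[OF vt] unfolding L_def by force
  then show ?thesis
    by simp
next
  case True
  define Y Z where "Y = {v. v < length ds \<and> b < Q v \<and> P v \<le> T}"
    and "Z = {v \<in> L. T < P v \<and> P v \<le> T + (b - a)}"
  have "Y \<inter> Z = {}" and YZ_V: "Y \<union> Z \<subseteq> {..<length ds}"
    unfolding Y_def Z_def L_def by auto
  have "Q ` (Y \<union> Z) \<subseteq> {b<..b + T}"
    using visit_times_bounds[OF vt] dmax \<open>length ds \<le> b\<close> \<open>a \<le> length ds\<close>
    unfolding Y_def Z_def L_def by (fastforce intro: order_trans)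
  then have "card (Q ` (Y \<union> Z)) \<le> card {b<..b + T}"
    by (rule card_mono[OF finite_greaterThanAtMost])
  moreover have "card (Q ` (Y \<union> Z)) = card (Y \<union> Z)"
    using inj_on_subset[OF visit_times_inj(2)[OF vt] YZ_V] by (rule card_image)
  moreover have "finite Y" "finite Z"
    unfolding Y_def Z_def L_def by auto
  ultimately have "card Y + card Z \<le> T"
    using card_Un_disjoint[OF _ _ \<open>Y \<inter> Z = {}\<close>] by simp
  then have "card Z \<le> 2 * (b - length ds)"
    using card_prefix_visits[OF vt, of T b] card_finished_by_le[OF vt dmax] True assms(3,4)
    unfolding Y_def by linarith
  moreover have "P ` L \<inter> {T<..T + (b - a)} = P ` Z"
    unfolding Z_def by auto
  ultimately show ?thesis
    using card_image_le[OF \<open>finite Z\<close>, of P] by simp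
qed

lemma two_deadline_late_necessary:
  assumes vt: "visit_times ds P Q"
    and da: "\<And>v. v < k \<Longrightarrow> ds ! v = a" and db: "\<And>v. k \<le> v \<Longrightarrow> v < length ds \<Longrightarrow> ds ! v = b"
    and "k < length ds" "a < b" "a < length ds" "length ds \<le> b" "b < length ds + k"
  shows "length ds + k \<le> 2 * a" "length ds < b"
    "periodic_slot (b - a) (2 * (b - length ds)) (k - (b - length ds) - 1) \<le> a"
proof -
  define e w where "e = b - length ds" and "w = b - a"
  have dmax: "ds ! v \<le> b" if "v < length ds" for v
    using that da db \<open>a < b\<close> by (cases "v < k") auto
  define L E where "L = {v. v < length ds \<and> ds ! v \<le> a \<and> b < Q v}"
    and "E = {v. v < length ds \<and> Q v \<le> b}"
  have "card E \<le> e"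
    using card_finished_by_le[OF vt dmax] unfolding E_def e_def by linarith
  have "{..<k} \<subseteq> L \<union> E"
    using da \<open>k < length ds\<close> unfolding L_def E_def by force
  then have "k \<le> card L + e"
    using card_mono[of "L \<union> E" "{..<k}"] card_Un_le[of L E] \<open>card E \<le> e\<close>
    unfolding L_def E_def by simp
  have L: "w < P v \<and> P v \<le> a \<and> b < Q v \<and> Q v \<le> 2 * a" if "v \<in> L" for v
    using that visit_times_bounds[OF vt, of v] unfolding L_def w_def by auto
  have "L \<subseteq> {..<length ds}"
    unfolding L_def by auto
  then have injP: "inj_on P L" and injQ: "inj_on Q L"
    using visit_times_inj[OF vt] inj_on_subset by blast+
  have "Q ` L \<subseteq> {b<..2 * a}"
    using L by auto
  then have "card (Q ` L) \<le> card {b<..2 * a}"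
    by (rule card_mono[OF finite_greaterThanAtMost])
  then have "card L \<le> 2 * a - b"
    using card_image[OF injQ] by simp
  then show "length ds + k \<le> 2 * a"
    using \<open>k \<le> card L + e\<close> \<open>length ds \<le> b\<close> \<open>b < length ds + k\<close> unfolding e_def by linarith
  have window: "card (P ` L \<inter> {T<..T + w}) \<le> 2 * e" for T
    using card_late_first_visits_window[OF vt] dmax \<open>a < length ds\<close> \<open>length ds \<le> b\<close>
    unfolding L_def e_def w_def by simp
  have "k - e - 1 < card (P ` L)"
    using \<open>k \<le> card L + e\<close> card_image[OF injP] \<open>length ds \<le> b\<close> \<open>b < length ds + k\<close>
    unfolding e_def by linarith
  have "0 < w"
    using \<open>a < b\<close> unfolding w_def by simp
  have "w < p" if "p \<in> P ` L" for p
    using that L by auto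
  then have slots: "0 < 2 * e" "\<exists>p\<in>P ` L. periodic_slot w (2 * e) (k - e - 1) \<le> p"
    using exists_ge_periodic_slot[OF \<open>0 < w\<close> _ window \<open>k - e - 1 < card (P ` L)\<close>] by blast+
  then show "length ds < b"
    unfolding e_def by simp
  obtain p where "p \<in> P ` L" "periodic_slot w (2 * e) (k - e - 1) \<le> p"
    using slots(2) by blast
  then show "periodic_slot (b - a) (2 * (b - length ds)) (k - (b - length ds) - 1) \<le> a"
    using L unfolding w_def e_def by fastforce
qed

section \<open>Two deadlines\<close>

(* N nodes, the first k with deadline a and the others with deadline b. *)
definition two_deadline_criterion :: "nat \<Rightarrow> nat \<Rightarrow> nat \<Rightarrow> nat \<Rightarrow> bool" where
  "two_deadline_criterion N k a b \<longleftrightarrow>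
     N \<le> a \<or> k < N \<and> k \<le> a \<and> (N + k \<le> b \<or> N < b \<and>
       (if N - a \<le> b - N then N + k \<le> 2 * a
        else periodic_slot (b - a) (2 * (b - N)) (k - (b - N) - 1) \<le> a))"

lemma two_deadline_criterion_sufficient:
  assumes da: "\<And>v. v < k \<Longrightarrow> ds ! v = a" and db: "\<And>v. k \<le> v \<Longrightarrow> v < length ds \<Longrightarrow> ds ! v = b"
    and "k \<le> length ds" "k < length ds \<Longrightarrow> a < b"
    and crit: "two_deadline_criterion (length ds) k a b"
  shows "two_visits_feasible ds"
proof -
  define N where "N = length ds"
  have dv: "ds ! v = (if v < k then a else b)" if "v < N" for v
    using that da db unfolding N_def by auto
  have dge: "a \<le> ds ! v" if "v < N" for v
    using that dv assms(4) unfolding N_def by auto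
  show ?thesis
  proof (cases "N \<le> a")
    case True
    then have "N \<le> ds ! v" if "v < N" for v
      using dge[OF that] by simp
    then show ?thesis
      by (intro two_rounds_feasible[of 0]) (force simp: N_def)+
  next
    case False
    then have "k < N" "k \<le> a" and rest: "N + k \<le> b \<or> N < b \<and>
        (if N - a \<le> b - N then N + k \<le> 2 * a
         else periodic_slot (b - a) (2 * (b - N)) (k - (b - N) - 1) \<le> a)"
      using crit unfolding two_deadline_criterion_def N_def by auto
    show ?thesis
    proof (cases "N + k \<le> b")
      case True
      then show ?thesis
        using \<open>k \<le> a\<close> \<open>k < N\<close> da db assms(4) by (intro two_rounds_feasible[of k]) (auto simp: N_def)
    next
      case False
      show ?thesis
      proof (cases "N - a \<le> b - N")
        case True
        then show ?thesis
          using False rest \<open>k < N\<close> \<open>\<not> N \<le> a\<close> da db assms(4)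
          by (intro two_rounds_feasible[of "N - a"]) (auto simp: N_def dv)
      next
        case False
        show ?thesis
        proof (rule periodic_schedule_feasible[OF N_def[symmetric], of b "b - N" k a])
          show "2 * (b - N) \<le> b - a"
            using False by linarith
        qed (use False \<open>\<not> N + k \<le> b\<close> rest \<open>k < N\<close> dv in auto)
      qed
    qed
  qed
qed

lemma two_deadline_criterion_necessary:
  assumes vt: "visit_times ds P Q"
    and da: "\<And>v. v < k \<Longrightarrow> ds ! v = a" and db: "\<And>v. k \<le> v \<Longrightarrow> v < length ds \<Longrightarrow> ds ! v = b"
    and "k \<le> length ds" "k < length ds \<Longrightarrow> a < b"
  shows "two_deadline_criterion (length ds) k a b"
proof (cases "length ds \<le> a")
  case False
  have "P v \<in> {1..a}" if "v < k" for v
    using visit_times_bounds(1,4)[OF vt, of v] da[OF that] that \<open>k \<le> length ds\<close> by simp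
  then have "P ` {..<k} \<subseteq> {1..a}"
    by auto
  then have "card (P ` {..<k}) \<le> card {1..a}"
    by (rule card_mono[OF finite_atLeastAtMost])
  moreover have "card (P ` {..<k}) = k"
    using visit_times_inj(1)[OF vt] \<open>k \<le> length ds\<close> by (simp add: card_image inj_on_subset)
  ultimately have "k \<le> a"
    by simp
  with False have "k < length ds" "a < b"
    using assms(5) by auto
  have "ds ! v \<le> b" if "v < length ds" for v
    using that da db \<open>a < b\<close> by (cases "v < k") auto
  then have "length ds \<le> b"
    using card_finished_by_le[OF vt] by (meson le_add1 le_trans)
  show ?thesis
  proof (cases "length ds + k \<le> b")
    case False
    have "a < length ds" "b < length ds + k"
      using \<open>\<not> length ds \<le> a\<close> False by simp_all
    note late = two_deadline_late_necessary[OF vt da db \<open>k < length ds\<close> \<open>a < b\<close>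
        \<open>a < length ds\<close> \<open>length ds \<le> b\<close> \<open>b < length ds + k\<close>]
    show ?thesis
      using late \<open>k < length ds\<close> \<open>k \<le> a\<close> unfolding two_deadline_criterion_def by simp
  qed (use \<open>k < length ds\<close> \<open>k \<le> a\<close> in \<open>auto simp: two_deadline_criterion_def\<close>)
qed (simp add: two_deadline_criterion_def)

lemma two_deadline_feasible_iff:
  assumes "\<And>v. v < k \<Longrightarrow> ds ! v = a" "\<And>v. k \<le> v \<Longrightarrow> v < length ds \<Longrightarrow> ds ! v = b"
    and "k \<le> length ds" "k < length ds \<Longrightarrow> a < b"
  shows "two_visits_feasible ds \<longleftrightarrow> two_deadline_criterion (length ds) k a b"
proof
  assume "two_visits_feasible ds"
  then obtain P Q where "visit_times ds P Q"
    by (rule feasible_imp_visit_times)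
  then show "two_deadline_criterion (length ds) k a b"
    by (rule two_deadline_criterion_necessary[OF _ assms])
qed (rule two_deadline_criterion_sufficient[OF assms])

section \<open>A linear-time register machine\<close>

definition reaches :: "instr list \<Rightarrow> nat list \<Rightarrow> config \<Rightarrow> nat \<Rightarrow> config \<Rightarrow> bool" where
  "reaches P ds c t c' \<longleftrightarrow> (step P ds ^^ t) c = c'"

lemma reaches_0 [simp]: "reaches P ds c 0 c' \<longleftrightarrow> c = c'"
  by (simp add: reaches_def)

lemma reaches_Suc: "reaches P ds c (Suc t) c' \<longleftrightarrow> reaches P ds (step P ds c) t c'"
  by (simp add: reaches_def funpow_Suc_right del: funpow.simps)

lemma reaches_numeral:
  "reaches P ds c (numeral n) c' \<longleftrightarrow> reaches P ds (step P ds c) (pred_numeral n) c'"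
  by (simp only: numeral_eq_Suc reaches_Suc)

lemma reaches_add: "reaches P ds c t c' \<Longrightarrow> reaches P ds c' t' c'' \<Longrightarrow> reaches P ds c (t + t') c''"
  unfolding reaches_def by (metis funpow_add comp_apply add.commute)

lemma run_eq_iff_reaches:
  "run P ds t = c \<longleftrightarrow> reaches P ds (Running 0 (\<lambda>r. if r = 0 then length ds else 0)) t c"
  by (simp add: run_def reaches_def)

(* Registers: 0 = N, 1 = 0, 2 = 1, 3 = a, 4 = b, 5 = k, 6 = last entry read (later N + k),
   8 = e = b - N, 9 = N - a, 10 = w = b - a, 11 = k - e - 1, 12 = t, 13 = t mod q,
   14 = periodic_slot w q t, 15 = q = 2 e, 16 = w - q, 17 = 2 a.
   Instructions 9-14 scan for k, instructions 37-45 step t up to k - e - 1. *)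
definition prog :: "instr list" where
  "prog = [
    JmpLess 1 0 2, Accept, Const 2 1, Read 3 1, Sub 7 0 2, Read 4 7, JmpLess 3 0 8, Accept,
    Const 5 1, JmpLess 5 0 11, Jmp 15, Read 6 5, JmpLess 3 6 15, Add 5 5 2, Jmp 9,
    JmpLess 5 0 17, Reject, JmpLess 3 5 16, Add 6 0 5, JmpLess 4 6 21, Accept,
    JmpLess 0 4 23, Reject, Sub 8 4 0, Sub 9 0 3, JmpLess 8 9 29, Add 17 3 3, JmpLess 17 6 16, Accept,
    Sub 10 4 3, Sub 11 5 8, Sub 11 11 2, Add 15 8 8, Sub 16 10 15,
    Const 12 0, Const 13 0, Add 14 10 2,
    JmpLess 12 11 39, Jmp 46, Add 12 12 2, Add 13 13 2, Add 14 14 2, JmpLess 13 15 37,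
    Const 13 0, Add 14 14 16, Jmp 37,
    JmpLess 3 14 16, Accept]"

lemmas prog_exec = reaches_numeral reaches_Suc step_def prog_def

lemma scan_loop:
  assumes "R 0 = length ds" "R 2 = 1" "R 3 = a" "i \<le> length ds"
  shows "\<exists>k x t. i \<le> k \<and> k \<le> length ds \<and> (\<forall>v. i \<le> v \<and> v < k \<longrightarrow> ds ! v \<le> a) \<and>
     (k < length ds \<longrightarrow> a < ds ! k) \<and> t \<le> 5 * (length ds - i) + 3 \<and>
     reaches prog ds (Running 9 (R(5 := i, 6 := y))) t (Running 15 (R(5 := k, 6 := x)))"
  using assms(4)
proof (induction "length ds - i" arbitrary: i y)
  case 0
  then have "i = length ds"
    by simp
  have "reaches prog ds (Running 9 (R(5 := i, 6 := y))) 2 (Running 15 (R(5 := i, 6 := y)))"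
    using assms \<open>i = length ds\<close> by (simp add: prog_exec)
  then have "i \<le> i \<and> i \<le> length ds \<and> (\<forall>v. i \<le> v \<and> v < i \<longrightarrow> ds ! v \<le> a) \<and>
      (i < length ds \<longrightarrow> a < ds ! i) \<and> 2 \<le> 5 * (length ds - i) + 3 \<and>
      reaches prog ds (Running 9 (R(5 := i, 6 := y))) 2 (Running 15 (R(5 := i, 6 := y)))"
    using \<open>i = length ds\<close> by simp
  then show ?case
    by blast
next
  case (Suc m)
  then have i: "i < length ds"
    by simp
  show ?case
  proof (cases "a < ds ! i")
    case True
    then have "reaches prog ds (Running 9 (R(5 := i, 6 := y))) 3
        (Running 15 (R(5 := i, 6 := ds ! i)))"
      using assms i by (simp add: prog_exec)
    then have "i \<le> i \<and> i \<le> length ds \<and> (\<forall>v. i \<le> v \<and> v < i \<longrightarrow> ds ! v \<le> a) \<and>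
        (i < length ds \<longrightarrow> a < ds ! i) \<and> 3 \<le> 5 * (length ds - i) + 3 \<and>
        reaches prog ds (Running 9 (R(5 := i, 6 := y))) 3 (Running 15 (R(5 := i, 6 := ds ! i)))"
      using i True by simp
    then show ?thesis
      by blast
  next
    case False
    then have first: "reaches prog ds (Running 9 (R(5 := i, 6 := y))) 5
        (Running 9 (R(5 := i + 1, 6 := ds ! i)))"
      using assms i by (simp add: prog_exec fun_upd_twist)
    have "m = length ds - (i + 1)"
      using Suc.hyps(2) by simp
    then obtain k x t where IH: "i + 1 \<le> k" "k \<le> length ds" "\<forall>v. i + 1 \<le> v \<and> v < k \<longrightarrow> ds ! v \<le> a"
      "k < length ds \<longrightarrow> a < ds ! k" "t \<le> 5 * (length ds - (i + 1)) + 3"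
      "reaches prog ds (Running 9 (R(5 := i + 1, 6 := ds ! i))) t (Running 15 (R(5 := k, 6 := x)))"
      using Suc.hyps(1)[of "i + 1" "ds ! i"] i by auto
    have "\<forall>v. i \<le> v \<and> v < k \<longrightarrow> ds ! v \<le> a"
      using IH(3) False by (metis Suc_eq_plus1 Suc_leI le_neq_implies_less not_less)
    moreover have "i \<le> k \<and> 5 + t \<le> 5 * (length ds - i) + 3"
      using IH(1,5) i by simp
    ultimately show ?thesis
      using IH(2,4) reaches_add[OF first IH(6)] by blast
  qed
qed

lemma slot_loop_step:
  assumes "R 2 = 1" "R 11 = m" "R 15 = q" "R 16 = w - q" "0 < q" "q \<le> w" "t < m"
  shows "reaches prog ds (Running 37 (R(12 := t, 13 := t mod q, 14 := periodic_slot w q t)))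
    (if Suc (t mod q) < q then 5 else 8)
    (Running 37 (R(12 := Suc t, 13 := Suc t mod q, 14 := periodic_slot w q (Suc t))))"
proof (cases "Suc (t mod q) < q")
  case False
  moreover have "t mod q < q"
    using assms(5) by simp
  ultimately have "Suc (t mod q) = q"
    by linarith
  then show ?thesis
    using assms periodic_slot_Suc[of q w t] by (simp add: prog_exec mod_Suc)
qed (use assms periodic_slot_Suc[of q w t] in \<open>simp add: prog_exec mod_Suc\<close>)

lemma slot_loop:
  assumes "R 2 = 1" "R 11 = m" "R 15 = q" "R 16 = w - q" "0 < q" "q \<le> w" "t \<le> m"
  shows "\<exists>s \<le> 8 * (m - t) + 2.
    reaches prog ds (Running 37 (R(12 := t, 13 := t mod q, 14 := periodic_slot w q t))) s
    (Running 46 (R(12 := m, 13 := m mod q, 14 := periodic_slot w q m)))"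
  using assms(7)
proof (induction "m - t" arbitrary: t)
  case 0
  then have "reaches prog ds (Running 37 (R(12 := t, 13 := t mod q, 14 := periodic_slot w q t))) 2
      (Running 46 (R(12 := m, 13 := m mod q, 14 := periodic_slot w q m)))"
    using assms by (simp add: prog_exec)
  moreover have "2 \<le> 8 * (m - t) + 2"
    by simp
  ultimately show ?case
    by blast
next
  case (Suc n)
  define s where "s = (if Suc (t mod q) < q then 5 else 8 :: nat)"
  have step: "reaches prog ds (Running 37 (R(12 := t, 13 := t mod q, 14 := periodic_slot w q t))) s
      (Running 37 (R(12 := Suc t, 13 := Suc t mod q, 14 := periodic_slot w q (Suc t))))"
    unfolding s_def using slot_loop_step[OF assms(1-6)] Suc.hyps(2) by simp
  have "\<exists>s' \<le> 8 * (m - Suc t) + 2. reaches prog ds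
      (Running 37 (R(12 := Suc t, 13 := Suc t mod q, 14 := periodic_slot w q (Suc t)))) s'
      (Running 46 (R(12 := m, 13 := m mod q, 14 := periodic_slot w q m)))"
    using Suc.hyps(1)[of "Suc t"] Suc.hyps(2) by simp
  then obtain s' where "s' \<le> 8 * (m - Suc t) + 2" and loop: "reaches prog ds
      (Running 37 (R(12 := Suc t, 13 := Suc t mod q, 14 := periodic_slot w q (Suc t)))) s'
      (Running 46 (R(12 := m, 13 := m mod q, 14 := periodic_slot w q m)))"
    by blast
  have "s \<le> 8" "m - Suc t = n"
    using Suc.hyps(2) unfolding s_def by simp_all
  then have "s + s' \<le> 8 * (m - t) + 2"
    using \<open>s' \<le> 8 * (m - Suc t) + 2\<close> Suc.hyps(2) by linarith
  then show ?case
    using reaches_add[OF step loop] by blast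
qed

lemma decide_periodic_case:
  assumes R: "R 0 = n" "R 1 = 0" "R 2 = 1" "R 3 = a" "R 4 = b" "R 5 = k"
    and "k < n" "k \<le> a" "b < n + k" "n < b" "b - n < n - a"
  shows "\<exists>t \<le> 8 * n + 40. reaches prog ds (Running 15 R) t
    (Halted (periodic_slot (b - a) (2 * (b - n)) (k - (b - n) - 1) \<le> a))"
proof -
  define e w q m where "e = b - n" and "w = b - a" and "q = 2 * (b - n)" and "m = k - e - 1"
  define R' where "R' = R(6 := n + k, 8 := e, 9 := n - a, 10 := w, 11 := m, 15 := q, 16 := w - q)"
  have q: "0 < q" "q \<le> w"
    using assms unfolding q_def w_def by auto
  have init: "reaches prog ds (Running 15 R) 16
      (Running 37 (R'(12 := 0, 13 := 0 mod q, 14 := periodic_slot w q 0)))"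
    using assms unfolding R'_def e_def w_def q_def m_def
    by (simp add: prog_exec periodic_slot_def mult_2)
  have "\<exists>s \<le> 8 * (m - 0) + 2. reaches prog ds
      (Running 37 (R'(12 := 0, 13 := 0 mod q, 14 := periodic_slot w q 0))) s
      (Running 46 (R'(12 := m, 13 := m mod q, 14 := periodic_slot w q m)))"
    using q R by (intro slot_loop) (simp_all add: R'_def)
  then obtain s where "s \<le> 8 * (m - 0) + 2" and loop: "reaches prog ds
      (Running 37 (R'(12 := 0, 13 := 0 mod q, 14 := periodic_slot w q 0))) s
      (Running 46 (R'(12 := m, 13 := m mod q, 14 := periodic_slot w q m)))"
    by blast
  have final: "reaches prog ds
      (Running 46 (R'(12 := m, 13 := m mod q, 14 := periodic_slot w q m))) 2
      (Halted (periodic_slot w q m \<le> a))"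
    using R unfolding R'_def by (simp add: prog_exec not_less)
  have "16 + s + 2 \<le> 8 * n + 40"
    using \<open>s \<le> 8 * (m - 0) + 2\<close> \<open>k < n\<close> unfolding m_def by simp
  then show ?thesis
    using reaches_add[OF reaches_add[OF init loop] final] unfolding w_def q_def m_def e_def by blast
qed

lemma decide_after_scan:
  assumes R: "R 0 = n" "R 1 = 0" "R 2 = 1" "R 3 = a" "R 4 = b" "R 5 = k" and "a < n"
  shows "\<exists>t \<le> 8 * n + 40.
    reaches prog ds (Running 15 R) t (Halted (two_deadline_criterion n k a b))"
proof -
  consider "\<not> k < n" | "k < n" "a < k" | "k < n" "k \<le> a" "n + k \<le> b"
    | "k < n" "k \<le> a" "b < n + k" "b \<le> n"
    | "k < n" "k \<le> a" "b < n + k" "n < b" "n - a \<le> b - n"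
    | "k < n" "k \<le> a" "b < n + k" "n < b" "b - n < n - a"
    by linarith
  then show ?thesis
  proof cases
    case 6
    then show ?thesis
      using decide_periodic_case[OF R 6] \<open>a < n\<close> by (simp add: two_deadline_criterion_def)
    \<comment> \<open>halted configurations are fixed points, so 11 steps cover all short branches\<close>
  qed (use R \<open>a < n\<close> in \<open>intro exI[of _ 11], simp add: prog_exec two_deadline_criterion_def\<close>)+
qed


lemma scan_and_decide:
  assumes R: "R 0 = length ds" "R 1 = 0" "R 2 = 1" "R 3 = a" "R 4 = b" and "a < length ds"
  shows "\<exists>k t. 1 \<le> k \<and> k \<le> length ds \<and> (\<forall>v. 1 \<le> v \<and> v < k \<longrightarrow> ds ! v \<le> a) \<and>
    (k < length ds \<longrightarrow> a < ds ! k) \<and> t \<le> 13 * length ds + 40 \<and>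
    reaches prog ds (Running 9 (R(5 := 1, 6 := 0))) t (Halted (two_deadline_criterion (length ds) k a b))"
proof -
  obtain k x t where k: "1 \<le> k" "k \<le> length ds" "\<forall>v. 1 \<le> v \<and> v < k \<longrightarrow> ds ! v \<le> a"
    "k < length ds \<longrightarrow> a < ds ! k" and "t \<le> 5 * (length ds - 1) + 3"
    and scan: "reaches prog ds (Running 9 (R(5 := 1, 6 := 0))) t (Running 15 (R(5 := k, 6 := x)))"
    using scan_loop[of R ds a 1 0] R \<open>a < length ds\<close> by auto
  have "\<exists>t' \<le> 8 * length ds + 40. reaches prog ds (Running 15 (R(5 := k, 6 := x))) t'
      (Halted (two_deadline_criterion (length ds) k a b))"
    using R \<open>a < length ds\<close> by (intro decide_after_scan) simp_all
  then obtain t' where "t' \<le> 8 * length ds + 40" and decide: "reaches prog ds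
      (Running 15 (R(5 := k, 6 := x))) t' (Halted (two_deadline_criterion (length ds) k a b))"
    by blast
  have "t + t' \<le> 13 * length ds + 40"
    using \<open>t \<le> 5 * (length ds - 1) + 3\<close> \<open>t' \<le> 8 * length ds + 40\<close> \<open>k \<le> length ds\<close> k(1) by simp
  then show ?thesis
    using k reaches_add[OF scan decide] by blast
qed

lemma sorted_two_values_eq_last:
  assumes "sorted ds" "card (set ds) \<le> 2" "ds ! 0 < ds ! v" "v < length ds"
  shows "ds ! v = ds ! (length ds - 1)"
proof (rule ccontr)
  assume ne: "ds ! v \<noteq> ds ! (length ds - 1)"
  have "0 < length ds"
    using assms(4) by linarith
  have "ds ! v \<le> ds ! (length ds - 1)"
    using assms(4) by (intro sorted_nth_mono[OF assms(1)]) auto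
  then have "card {ds ! 0, ds ! v, ds ! (length ds - 1)} = 3"
    using assms(3) ne by (simp add: less_imp_neq)
  moreover have "{ds ! 0, ds ! v, ds ! (length ds - 1)} \<subseteq> set ds"
    using assms(4) \<open>0 < length ds\<close> by (simp add: nth_mem)
  then have "card {ds ! 0, ds ! v, ds ! (length ds - 1)} \<le> card (set ds)"
    by (rule card_mono[OF finite_set])
  ultimately show False
    using assms(2) by linarith
qed

lemma sorted_two_valued_feasible_iff:
  assumes sorted: "sorted ds" and two: "card (set ds) \<le> 2" and "k \<le> length ds"
    and le: "\<And>v. v < k \<Longrightarrow> ds ! v \<le> ds ! 0" and gt: "k < length ds \<Longrightarrow> ds ! 0 < ds ! k"
  shows "two_visits_feasible ds \<longleftrightarrow>
    two_deadline_criterion (length ds) k (ds ! 0) (ds ! (length ds - 1))"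
proof (rule two_deadline_feasible_iff)
  show "ds ! v = ds ! 0" if "v < k" for v
    using le[OF that] sorted_nth_mono[OF sorted, of 0 v] that \<open>k \<le> length ds\<close> by simp
  show late: "ds ! v = ds ! (length ds - 1)" if "k \<le> v" "v < length ds" for v
  proof (rule sorted_two_values_eq_last[OF sorted two _ \<open>v < length ds\<close>])
    show "ds ! 0 < ds ! v"
      using gt sorted_nth_mono[OF sorted, of k v] that by fastforce
  qed
  show "k < length ds \<Longrightarrow> ds ! 0 < ds ! (length ds - 1)"
    using late[of k] gt by simp
qed fact

lemma prog_decides_two_valued:
  assumes sorted: "sorted ds" and two: "card (set ds) \<le> 2"
  shows "\<exists>t \<le> 100 * (length ds + 1). run prog ds t = Halted (two_visits_feasible ds)"
proof (cases "ds = []")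
  case True
  have "two_visits_feasible []"
    unfolding two_visits_feasible_def by simp
  moreover have "reaches prog ds (Running 0 (\<lambda>r. if r = 0 then length ds else 0)) 2 (Halted True)"
    using True by (simp add: prog_exec)
  ultimately show ?thesis
    using True unfolding run_eq_iff_reaches by (intro exI[of _ 2]) simp
next
  case False
  define n a b where "n = length ds" and "a = ds ! 0" and "b = ds ! (n - 1)"
  define R0 where "R0 = (\<lambda>r::nat. if r = 0 then n else 0)"
  define R1 where "R1 = R0(2 := 1, 3 := a, 7 := n - 1, 4 := b)"
  have "0 < n"
    using False unfolding n_def by simp
  have start: "reaches prog ds (Running 0 R0) 5 (Running 6 R1)"
    using \<open>0 < n\<close> unfolding R1_def R0_def a_def b_def n_def by (simp add: prog_exec)
  have run0: "run prog ds t = c \<longleftrightarrow> reaches prog ds (Running 0 R0) t c" for t c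
    unfolding run_eq_iff_reaches R0_def n_def ..
  show ?thesis
  proof (cases "a < n")
    case False
    have "reaches prog ds (Running 6 R1) 2 (Halted True)"
      using False unfolding R1_def R0_def by (simp add: prog_exec)
    then have "run prog ds (5 + 2) = Halted True"
      unfolding run0 by (rule reaches_add[OF start])
    moreover have "n \<le> ds ! v" if "v < n" for v
      using False sorted_nth_mono[OF sorted, of 0 v] that unfolding a_def n_def by simp
    then have "two_visits_feasible ds"
      by (intro two_rounds_feasible[of 0]) (force simp: n_def)+
    ultimately show ?thesis
      by (intro exI[of _ "5 + 2"]) simp
  next
    case True
    have to_scan: "reaches prog ds (Running 6 R1) 2 (Running 9 (R1(5 := 1, 6 := 0)))"
      using True unfolding R1_def R0_def by (simp add: prog_exec fun_eq_iff)
    obtain k t where k: "1 \<le> k" "k \<le> n" "\<forall>v. 1 \<le> v \<and> v < k \<longrightarrow> ds ! v \<le> a" "k < n \<longrightarrow> a < ds ! k"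
      and "t \<le> 13 * n + 40"
      and scan: "reaches prog ds (Running 9 (R1(5 := 1, 6 := 0))) t (Halted (two_deadline_criterion n k a b))"
      using scan_and_decide[of R1 ds a b] True unfolding R1_def R0_def n_def by auto
    have "ds ! v \<le> ds ! 0" if "v < k" for v
      using k(3) that unfolding a_def by (cases "v = 0") auto
    then have "two_visits_feasible ds \<longleftrightarrow> two_deadline_criterion n k a b"
      using sorted_two_valued_feasible_iff[OF sorted two] k(2,4) unfolding n_def a_def b_def by simp
    moreover have "run prog ds (5 + 2 + t) = Halted (two_deadline_criterion n k a b)"
      unfolding run0 by (rule reaches_add[OF reaches_add[OF start to_scan] scan])
    ultimately have "run prog ds (5 + 2 + t) = Halted (two_visits_feasible ds)"
      by simp
    moreover have "5 + 2 + t \<le> 100 * (length ds + 1)"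
      using \<open>t \<le> 13 * n + 40\<close> unfolding n_def by simp
    ultimately show ?thesis
      by blast
  qed
qed

theorem theorem4:
  shows "\<exists>(P :: instr list) (c :: nat). \<forall>ds :: nat list.
           sorted ds \<and> (\<forall>d \<in> set ds. 0 < d) \<and> card (set ds) \<le> 2 \<longrightarrow>
           (\<exists>t \<le> c * (length ds + 1). run P ds t = Halted (two_visits_feasible ds))"
  using prog_decides_two_valued by blast

end
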